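(* Let $n\ge2$ and $0\le k<n$. The number of ASM-recurrent configurations $c$ on the fan graph $F_n$ with $\mathrm{level}(c)=k$ is $$\sum_{r=0}^{n-k-1}\binom{n-k-1}{r}\binom{r+k}{r}.$$
   Context: $F_n$: path on $[n]$ (edges $\{i,i+1\}$) plus a sink $0$ adjacent to all of $[n]$. Sandpile setting: configurations $c\in\mathbb{Z}_{\ge0}^n$, stable iff $c_i<\deg(i)$ (on $F_n$: $c\in\{0,1,2\}^n$, $c_1,c_n\le1$). ASM: an unstable vertex loses $\deg(i)$ grains and sends one to each neighbour (grains to the sink vanish); Markov chain adds a grain at a random vertex (fully supported distribution) and stabilises; ASM-recurrent = recurrent state. Known: stable $c$ on $F_n$ is ASM-recurrent iff for all $i<j$ with $c_i=c_j=0$ some $i<k<j$ has $c_k=2$. $\mathrm{level}(c)=\sum_i c_i-(n-1)$. *)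

theory Defs
  imports Main
begin

text \<open>Fan graph F_n: vertices 1..n on a path, plus sink 0 adjacent to all of 1..n.
  Configurations are functions nat => nat supported on {1..n}.\<close>

definition fan_adj :: "nat \<Rightarrow> nat \<Rightarrow> nat \<Rightarrow> bool" where
  "fan_adj n i j \<longleftrightarrow> i \<in> {0..n} \<and> j \<in> {0..n} \<and> i \<noteq> j \<and>
     (i = 0 \<or> j = 0 \<or> j = i + 1 \<or> i = j + 1)"

definition fan_deg :: "nat \<Rightarrow> nat \<Rightarrow> nat" where
  "fan_deg n i = card {j. fan_adj n i j}"

definition is_config :: "nat \<Rightarrow> (nat \<Rightarrow> nat) \<Rightarrow> bool" where
  "is_config n c \<longleftrightarrow> (\<forall>i. i \<notin> {1..n} \<longrightarrow> c i = 0)"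

definition stable :: "nat \<Rightarrow> (nat \<Rightarrow> nat) \<Rightarrow> bool" where
  "stable n c \<longleftrightarrow> is_config n c \<and> (\<forall>i\<in>{1..n}. c i < fan_deg n i)"

text \<open>Toppling an unstable non-sink vertex i: it loses deg(i) grains and each
  non-sink neighbour gains one (grains sent to the sink vanish).\<close>
definition topple :: "nat \<Rightarrow> (nat \<Rightarrow> nat) \<Rightarrow> (nat \<Rightarrow> nat) \<Rightarrow> bool" where
  "topple n c d \<longleftrightarrow> (\<exists>i\<in>{1..n}. fan_deg n i \<le> c i \<and>
     d = (\<lambda>j. if j = i then c i - fan_deg n i
               else if j \<in> {1..n} \<and> fan_adj n i j then c j + 1 else c j))"

definition add_grain :: "(nat \<Rightarrow> nat) \<Rightarrow> nat \<Rightarrow> nat \<Rightarrow> nat" where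
  "add_grain c i = c(i := c i + 1)"

text \<open>One step of the ASM Markov chain (fully supported distribution, so every
  vertex may receive the grain): add a grain at some vertex i and stabilise.\<close>
definition asm_step :: "nat \<Rightarrow> (nat \<Rightarrow> nat) \<Rightarrow> (nat \<Rightarrow> nat) \<Rightarrow> bool" where
  "asm_step n c d \<longleftrightarrow> stable n c \<and> stable n d \<and>
     (\<exists>i\<in>{1..n}. (topple n)\<^sup>*\<^sup>* (add_grain c i) d)"

text \<open>Recurrent state of the (finite) Markov chain on stable configurations:
  every state reachable from c can reach c back.\<close>
definition asm_recurrent :: "nat \<Rightarrow> (nat \<Rightarrow> nat) \<Rightarrow> bool" where
  "asm_recurrent n c \<longleftrightarrow> stable n c \<and>
     (\<forall>d. (asm_step n)\<^sup>*\<^sup>* c d \<longrightarrow> (asm_step n)\<^sup>*\<^sup>* d c)"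

definition level :: "nat \<Rightarrow> (nat \<Rightarrow> nat) \<Rightarrow> int" where
  "level n c = int (\<Sum>i\<in>{1..n}. c i) - (int n - 1)"

end

theory Submission
  imports Defs
begin

(* A stable configuration on the fan is recurrent iff any two of its zeros are separated by a 2.
   The condition holds for the maximal stable configuration, which every stable configuration
   reaches by adding grains, and it survives adding grains and toppling; so it is necessary.
   Conversely, filling the prefix up to the first zero and then adding a grain at vertex 1
   starts an avalanche along the path that recreates this zero, so by induction on the zeros
   every configuration satisfying the condition is reachable from the maximal one.
   Read as a word over {0, 1, 2} with end letters at most 1, such a configuration is accepted by
   a two-state scan (is a zero waiting for a 2?), and counting the accepted words by length and
   letter sum gives Pascal-type recurrences solved by the sums of (m choose r) * (r + k choose k). *)

section \<open>Toppling on the fan\<close>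

lemma fan_adj_iff:
  assumes "i \<in> {1..n}" "j \<in> {1..n}"
  shows "fan_adj n i j \<longleftrightarrow> j = i + 1 \<or> i = j + 1"
  using assms by (auto simp: fan_adj_def)

lemma fan_deg_eq:
  assumes "2 \<le> n" "i \<in> {1..n}"
  shows "fan_deg n i = (if i = 1 \<or> i = n then 2 else 3)"
proof -
  have "{j. fan_adj n i j} =
      (if i = 1 then {0, 2} else if i = n then {0, n - 1} else {0, i - 1, i + 1})"
    using assms by (auto simp: fan_adj_def)
  then show ?thesis
    using assms by (auto simp: fan_deg_def)
qed

lemma fan_deg_ge_2: "2 \<le> n \<Longrightarrow> i \<in> {1..n} \<Longrightarrow> 2 \<le> fan_deg n i"
  by (simp add: fan_deg_eq)

definition fire :: "nat \<Rightarrow> nat \<Rightarrow> (nat \<Rightarrow> nat) \<Rightarrow> nat \<Rightarrow> nat" where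
  "fire n v c = (\<lambda>j. if j = v then c v - fan_deg n v
     else if j \<in> {1..n} \<and> (j = v + 1 \<or> v = j + 1) then c j + 1 else c j)"

lemma topple_iff: "topple n c d \<longleftrightarrow> (\<exists>v\<in>{1..n}. fan_deg n v \<le> c v \<and> d = fire n v c)"
proof -
  have "(\<lambda>j. if j = v then c v - fan_deg n v
          else if j \<in> {1..n} \<and> fan_adj n v j then c j + 1 else c j) = fire n v c"
    if "v \<in> {1..n}" for v
    using fan_adj_iff[OF that] by (intro ext) (auto simp: fire_def)
  then show ?thesis
    unfolding topple_def by (metis (no_types, lifting))
qed

lemma fire_ge: "j \<noteq> v \<Longrightarrow> c j \<le> fire n v c j"
  by (simp add: fire_def)

lemma fire_neighbour:
  "j \<in> {1..n} \<Longrightarrow> j = v + 1 \<or> v = j + 1 \<Longrightarrow> fire n v c j = c j + 1"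
  by (auto simp: fire_def)

section \<open>Recurrent configurations\<close>

definition zeros_separated :: "nat \<Rightarrow> (nat \<Rightarrow> nat) \<Rightarrow> bool" where
  "zeros_separated n c \<longleftrightarrow> (\<forall>i j. 1 \<le> i \<longrightarrow> i < j \<longrightarrow> j \<le> n \<longrightarrow> c i = 0 \<longrightarrow> c j = 0 \<longrightarrow>
      (\<exists>k. i < k \<and> k < j \<and> 2 \<le> c k))"

lemma zeros_separatedD:
  "zeros_separated n c \<Longrightarrow> 1 \<le> i \<Longrightarrow> i < j \<Longrightarrow> j \<le> n \<Longrightarrow> c i = 0 \<Longrightarrow> c j = 0 \<Longrightarrow>
    \<exists>k. i < k \<and> k < j \<and> 2 \<le> c k"
  unfolding zeros_separated_def by blast

lemma zeros_separated_mono: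
  assumes "zeros_separated n c" "\<And>i. c i \<le> d i"
  shows "zeros_separated n d"
  unfolding zeros_separated_def
proof (intro allI impI)
  fix i j assume "1 \<le> i" "i < j" "j \<le> n" "d i = 0" "d j = 0"
  with assms obtain k where "i < k" "k < j" "2 \<le> c k"
    by (metis le_zero_eq zeros_separatedD)
  then show "\<exists>k>i. k < j \<and> 2 \<le> d k"
    using assms(2)[of k] by auto
qed

text \<open>The 2 is the neighbour of the fired vertex if that neighbour already held a grain, and
  otherwise it comes from the separation of the old zeros \<open>i\<close> and \<open>v - 1\<close> (resp. \<open>v + 1\<close> and
  \<open>j\<close>).\<close>

lemma two_between_zero_and_fired_left:
  assumes "zeros_separated n c" "v \<le> n" "1 \<le> i" "i < v" "fire n v c i = 0"
  shows "\<exists>k. i < k \<and> k < v \<and> 2 \<le> fire n v c k"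
proof -
  have nb: "fire n v c (v - 1) = c (v - 1) + 1"
    using assms by (intro fire_neighbour) auto
  then have "i \<noteq> v - 1"
    using assms(5) by auto
  then have "i < v - 1"
    using assms(4) by linarith
  have ci: "c i = 0"
    using assms fire_ge[of i v c n] by simp
  show ?thesis
  proof (cases "c (v - 1) = 0")
    case True
    then obtain k where "i < k" "k < v - 1" "2 \<le> c k"
      using zeros_separatedD[OF assms(1) assms(3) \<open>i < v - 1\<close>] assms(2) ci by force
    moreover have "c k \<le> fire n v c k"
      using \<open>k < v - 1\<close> by (intro fire_ge) simp
    ultimately show ?thesis
      by (intro exI[of _ k]) auto
  next
    case False
    then show ?thesis
      using nb \<open>i < v - 1\<close> by (intro exI[of _ "v - 1"]) auto
  qed
qed

lemma two_between_fired_and_zero_right: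
  assumes "zeros_separated n c" "1 \<le> v" "v < j" "j \<le> n" "fire n v c j = 0"
  shows "\<exists>k. v < k \<and> k < j \<and> 2 \<le> fire n v c k"
proof -
  have nb: "fire n v c (v + 1) = c (v + 1) + 1"
    using assms by (intro fire_neighbour) auto
  then have "j \<noteq> v + 1"
    using assms(5) by auto
  then have "v + 1 < j"
    using assms(3) by linarith
  have cj: "c j = 0"
    using assms fire_ge[of j v c n] by simp
  show ?thesis
  proof (cases "c (v + 1) = 0")
    case True
    then obtain k where "v + 1 < k" "k < j" "2 \<le> c k"
      using zeros_separatedD[OF assms(1) _ \<open>v + 1 < j\<close>] assms cj by auto
    then show ?thesis
      using fire_ge[of k v c n] by (intro exI[of _ k]) auto
  next
    case False
    then show ?thesis
      using nb \<open>v + 1 < j\<close> by (intro exI[of _ "v + 1"]) auto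
  qed
qed

lemma zeros_separated_fire:
  assumes "zeros_separated n c" "v \<in> {1..n}"
  shows "zeros_separated n (fire n v c)"
  unfolding zeros_separated_def
proof (intro allI impI)
  fix i j assume ij: "1 \<le> i" "i < j" "j \<le> n" "fire n v c i = 0" "fire n v c j = 0"
  show "\<exists>k>i. k < j \<and> 2 \<le> fire n v c k"
  proof (cases "i = v \<or> j = v")
    case True
    then show ?thesis
      using two_between_fired_and_zero_right[OF assms(1)]
        two_between_zero_and_fired_left[OF assms(1)] assms(2) ij by fastforce
  next
    case False
    then have "c i = 0" "c j = 0"
      using ij fire_ge[of i v c n] fire_ge[of j v c n] by auto
    then obtain k where k: "i < k" "k < j" "2 \<le> c k"
      using zeros_separatedD[OF assms(1)] ij by blast
    show ?thesis
    proof (cases "k = v")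
      case True
      then show ?thesis
        using two_between_zero_and_fired_left[OF assms(1) _ ij(1) _ ij(4)] k ij by force
    next
      case False
      then show ?thesis
        using k fire_ge[of k v c n] by auto
    qed
  qed
qed

definition max_stable :: "nat \<Rightarrow> nat \<Rightarrow> nat" where
  "max_stable n = (\<lambda>i. if i \<in> {1..n} then fan_deg n i - 1 else 0)"

lemma stable_max_stable: "2 \<le> n \<Longrightarrow> stable n (max_stable n)"
  using fan_deg_ge_2[of n] by (force simp: stable_def is_config_def max_stable_def)

lemma stable_le_max_stable: "stable n c \<Longrightarrow> c i \<le> max_stable n i"
  by (cases "i \<in> {1..n}") (force simp: stable_def is_config_def max_stable_def)+

lemma zeros_separated_max_stable: "2 \<le> n \<Longrightarrow> zeros_separated n (max_stable n)"
  using fan_deg_ge_2[of n] by (fastforce simp: zeros_separated_def max_stable_def)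

lemma zeros_separated_rtranclp_topple:
  "(topple n)\<^sup>*\<^sup>* c d \<Longrightarrow> zeros_separated n c \<Longrightarrow> zeros_separated n d"
  by (induction rule: rtranclp_induct) (auto simp: topple_iff intro: zeros_separated_fire)

lemma zeros_separated_asm_step:
  assumes "asm_step n c d" "zeros_separated n c"
  shows "zeros_separated n d"
proof -
  obtain i where "(topple n)\<^sup>*\<^sup>* (add_grain c i) d"
    using assms(1) by (auto simp: asm_step_def)
  moreover have "zeros_separated n (add_grain c i)"
    by (rule zeros_separated_mono[OF assms(2)]) (simp add: add_grain_def)
  ultimately show ?thesis
    by (rule zeros_separated_rtranclp_topple)
qed

lemma zeros_separated_asm_steps:
  "(asm_step n)\<^sup>*\<^sup>* c d \<Longrightarrow> zeros_separated n c \<Longrightarrow> zeros_separated n d"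
  by (induction rule: rtranclp_induct) (auto intro: zeros_separated_asm_step)

lemma stable_asm_steps: "(asm_step n)\<^sup>*\<^sup>* c d \<Longrightarrow> stable n c \<Longrightarrow> stable n d"
  by (induction rule: rtranclp_induct) (auto simp: asm_step_def)

lemma asm_step_add_grain:
  assumes "stable n c" "i \<in> {1..n}" "c i + 1 < fan_deg n i"
  shows "asm_step n c (add_grain c i)"
proof -
  have "stable n (add_grain c i)"
    using assms by (auto simp: stable_def is_config_def add_grain_def)
  then show ?thesis
    using assms by (auto simp: asm_step_def)
qed

lemma asm_steps_if_le:
  assumes "stable n c" "stable n d" "\<And>i. c i \<le> d i"
  shows "(asm_step n)\<^sup>*\<^sup>* c d"
  using assms
proof (induction "\<Sum>i\<in>{1..n}. d i - c i" arbitrary: c rule: less_induct)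
  case less
  show ?case
  proof (cases "\<exists>i\<in>{1..n}. c i < d i")
    case False
    have "c i = d i" for i
    proof (cases "i \<in> {1..n}")
      case True
      then show ?thesis
        using False less.prems(3)[of i] by (simp add: not_less le_antisym)
    next
      case False
      then show ?thesis
        using less.prems(1,2) by (simp add: stable_def is_config_def)
    qed
    then have "c = d"
      by (rule ext)
    then show ?thesis
      by simp
  next
    case True
    then obtain i where i: "i \<in> {1..n}" "c i < d i"
      by blast
    have "d i < fan_deg n i"
      using less.prems i by (auto simp: stable_def)
    then have step: "asm_step n c (add_grain c i)"
      using asm_step_add_grain[OF less.prems(1) i(1)] i by simp
    have "(\<Sum>j\<in>{1..n}. d j - add_grain c i j) < (\<Sum>j\<in>{1..n}. d j - c j)"
      using i less.prems(3) by (intro sum_strict_mono_ex1) (auto simp: add_grain_def)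
    moreover have "stable n (add_grain c i)" "\<And>j. add_grain c i j \<le> d j"
      using step less.prems(3) i by (auto simp: asm_step_def add_grain_def)
    ultimately have "(asm_step n)\<^sup>*\<^sup>* (add_grain c i) d"
      using less.hyps less.prems(2) by blast
    then show ?thesis
      using step by (meson converse_rtranclp_into_rtranclp)
  qed
qed

lemma asm_steps_to_max_stable: "2 \<le> n \<Longrightarrow> stable n c \<Longrightarrow> (asm_step n)\<^sup>*\<^sup>* c (max_stable n)"
  by (rule asm_steps_if_le[OF _ stable_max_stable]) (auto intro: stable_le_max_stable)

text \<open>If the vertices \<open>1..z\<close> are all full, a grain added at vertex 1 makes them topple in turn
  from left to right; each leaves behind the grain received from its right neighbour, except
  the last one \<open>z\<close>, which ends empty.\<close>

definition avalanche :: "nat \<Rightarrow> nat \<Rightarrow> (nat \<Rightarrow> nat) \<Rightarrow> nat \<Rightarrow> nat" where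
  "avalanche n z c = (\<lambda>j. if 1 \<le> j \<and> j < z then 1 else if j = z then 0
     else if j = z + 1 \<and> z + 1 \<le> n then c j + 1 else c j)"

lemma rtranclp_topple_avalanche:
  assumes "2 \<le> n" "1 \<le> k" "k \<le> z" "z \<le> n"
    and full: "\<And>j. 1 \<le> j \<Longrightarrow> j \<le> z \<Longrightarrow> c j = fan_deg n j - 1"
  shows "(topple n)\<^sup>*\<^sup>* (add_grain c 1) (avalanche n k c)"
  using assms(2,3)
proof (induction k rule: nat_induct_at_least)
  case base
  have "2 \<le> fan_deg n 1" "c 1 = fan_deg n 1 - 1"
    using assms fan_deg_ge_2[of n 1] full[of 1] by auto
  then have "fire n 1 (add_grain c 1) = avalanche n 1 c"
    using assms(1) by (intro ext) (auto simp: fire_def add_grain_def avalanche_def)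
  moreover have "topple n (add_grain c 1) (fire n 1 (add_grain c 1))"
    unfolding topple_iff using assms \<open>c 1 = _\<close> by (auto simp: add_grain_def)
  ultimately show ?case
    by simp
next
  case (Suc k)
  have "2 \<le> fan_deg n (k + 1)" "c (k + 1) = fan_deg n (k + 1) - 1"
    using assms Suc fan_deg_ge_2[of n "k + 1"] full[of "k + 1"] by auto
  then have "fire n (k + 1) (avalanche n k c) = avalanche n (Suc k) c"
    using assms Suc by (intro ext) (auto simp: fire_def avalanche_def)
  moreover have "topple n (avalanche n k c) (fire n (k + 1) (avalanche n k c))"
    unfolding topple_iff using assms Suc \<open>c (k + 1) = _\<close> by (auto simp: avalanche_def)
  ultimately show ?case
    using Suc by (metis Suc_leD rtranclp.rtrancl_into_rtrancl)
qed

lemma asm_step_avalanche: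
  assumes "2 \<le> n" "stable n c" "1 \<le> z" "z \<le> n"
    and full: "\<And>j. 1 \<le> j \<Longrightarrow> j \<le> z \<Longrightarrow> c j = fan_deg n j - 1"
    and room: "z < n \<Longrightarrow> c (z + 1) + 2 \<le> fan_deg n (z + 1)"
  shows "asm_step n c (avalanche n z c)"
proof -
  have "c j < fan_deg n j" "2 \<le> fan_deg n j" if "j \<in> {1..n}" for j
    using assms(2) fan_deg_ge_2[OF assms(1) that] that by (simp_all add: stable_def)
  then have "avalanche n z c j < fan_deg n j" if "j \<in> {1..n}" for j
    using that room by (fastforce simp: avalanche_def)
  moreover have "avalanche n z c j = 0" if "j \<notin> {1..n}" for j
    using assms(2-4) that by (auto simp: stable_def is_config_def avalanche_def)
  ultimately have "stable n (avalanche n z c)"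
    by (simp add: stable_def is_config_def)
  then show ?thesis
    using assms rtranclp_topple_avalanche[OF assms(1,3) order_refl assms(4) full]
    by (auto simp: asm_step_def)
qed

text \<open>When \<open>z\<close> is the first zero of \<open>c\<close>, the avalanche started from this configuration ends
  pointwise below \<open>c\<close>; the grain removed at \<open>z + 1\<close> is the one the avalanche passes on.\<close>

definition fill_prefix :: "nat \<Rightarrow> nat \<Rightarrow> (nat \<Rightarrow> nat) \<Rightarrow> nat \<Rightarrow> nat" where
  "fill_prefix n z c = (\<lambda>j. if 1 \<le> j \<and> j \<le> z then fan_deg n j - 1
     else if j = z + 1 \<and> z + 1 \<le> n then c j - 1 else c j)"

lemma stable_fill_prefix:
  assumes "stable n c" "z \<le> n"
  shows "stable n (fill_prefix n z c)"
proof -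
  have "c j < fan_deg n j" if "j \<in> {1..n}" for j
    using assms(1) that by (simp add: stable_def)
  then have "fill_prefix n z c j < fan_deg n j" if "j \<in> {1..n}" for j
    using that by (fastforce simp: fill_prefix_def)
  moreover have "fill_prefix n z c j = 0" if "j \<notin> {1..n}" for j
    using assms that by (auto simp: stable_def is_config_def fill_prefix_def)
  ultimately show ?thesis
    by (simp add: stable_def is_config_def)
qed

lemma fill_prefix_all: "stable n c \<Longrightarrow> fill_prefix n n c = max_stable n"
  by (intro ext) (auto simp: stable_def is_config_def fill_prefix_def max_stable_def)

lemma asm_steps_from_fill_prefix:
  assumes "2 \<le> n" "stable n c" "1 \<le> z" "z \<le> n"
    and nonzero: "\<And>j. 1 \<le> j \<Longrightarrow> j < z \<Longrightarrow> c j \<noteq> 0" "z < n \<Longrightarrow> c (z + 1) \<noteq> 0"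
    and reach: "(asm_step n)\<^sup>*\<^sup>* (max_stable n) (fill_prefix n z c)"
  shows "(asm_step n)\<^sup>*\<^sup>* (max_stable n) c"
proof -
  let ?a = "avalanche n z (fill_prefix n z c)"
  have "c (z + 1) < fan_deg n (z + 1)" if "z < n"
    using assms(2) that by (auto simp: stable_def)
  then have "asm_step n (fill_prefix n z c) ?a"
    using assms by (intro asm_step_avalanche stable_fill_prefix) (auto simp: fill_prefix_def)
  moreover have "?a j \<le> c j" for j
    using nonzero(1)[of j] nonzero(2) by (auto simp: avalanche_def fill_prefix_def)
  ultimately have "(asm_step n)\<^sup>*\<^sup>* ?a c"
    using assms(2) by (intro asm_steps_if_le) (auto simp: asm_step_def)
  with reach \<open>asm_step n (fill_prefix n z c) ?a\<close> show ?thesis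
    by (meson rtranclp.rtrancl_into_rtrancl rtranclp_trans)
qed

lemma fill_prefix_beyond: "z + 1 < j \<Longrightarrow> fill_prefix n z c j = c j"
  by (simp add: fill_prefix_def)

lemma zeros_separated_fill_prefix:
  assumes "2 \<le> n" "zeros_separated n c" "1 \<le> z" "c z = 0"
  shows "zeros_separated n (fill_prefix n z c)"
  unfolding zeros_separated_def
proof (intro allI impI)
  fix i j assume ij: "1 \<le> i" "i < j" "j \<le> n" "fill_prefix n z c i = 0" "fill_prefix n z c j = 0"
  have "\<not> i \<le> z"
    using ij fan_deg_ge_2[OF assms(1), of i] by (auto simp: fill_prefix_def)
  then have "c j = 0"
    using ij fill_prefix_beyond[of z j n c] by simp
  show "\<exists>k>i. k < j \<and> 2 \<le> fill_prefix n z c k"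
  proof (cases "i = z + 1")
    case True
    obtain k where k: "z < k" "k < j" "2 \<le> c k"
      using zeros_separatedD[OF assms(2,3), of j] \<open>\<not> i \<le> z\<close> ij(2,3) assms(4) \<open>c j = 0\<close>
      by auto
    have "c (z + 1) \<le> 1"
      using ij True by (simp add: fill_prefix_def)
    then have "k \<noteq> z + 1"
      using k by auto
    then have "z + 1 < k"
      using k by linarith
    then show ?thesis
      using k True fill_prefix_beyond[of z k n c] by (intro exI[of _ k]) simp
  next
    case False
    then have "c i = 0"
      using ij \<open>\<not> i \<le> z\<close> fill_prefix_beyond[of z i n c] by simp
    then obtain k where "i < k" "k < j" "2 \<le> c k"
      using zeros_separatedD[OF assms(2) ij(1-3)] \<open>c j = 0\<close> by blast
    then show ?thesis
      using False \<open>\<not> i \<le> z\<close> fill_prefix_beyond[of z k n c] by (intro exI[of _ k]) simp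
  qed
qed

text \<open>Filling the prefix up to the first zero \<open>z\<close> removes \<open>z\<close> and creates at most the lighter
  zero \<open>z + 1\<close>, so this weight decreases.\<close>

definition zero_weight :: "nat \<Rightarrow> (nat \<Rightarrow> nat) \<Rightarrow> nat" where
  "zero_weight n c = (\<Sum>j\<in>{j\<in>{1..n}. c j = 0}. n + 1 - j)"

lemma zero_weight_fill_prefix_less:
  assumes "2 \<le> n" "1 \<le> z" "z \<le> n" "c z = 0"
  shows "zero_weight n (fill_prefix n z c) < zero_weight n c"
proof -
  let ?Z = "{j\<in>{1..n}. c j = 0}"
  have "{j\<in>{1..n}. fill_prefix n z c j = 0} \<subseteq> insert (z + 1) (?Z - {z})"
  proof
    fix j assume j: "j \<in> {j\<in>{1..n}. fill_prefix n z c j = 0}"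
    then have "z < j"
      using fan_deg_ge_2[OF assms(1), of j] by (cases "j \<le> z") (auto simp: fill_prefix_def)
    then show "j \<in> insert (z + 1) (?Z - {z})"
      using j by (auto simp: fill_prefix_def split: if_splits)
  qed
  then have "zero_weight n (fill_prefix n z c) \<le> (\<Sum>j\<in>insert (z + 1) (?Z - {z}). n + 1 - j)"
    unfolding zero_weight_def by (intro sum_mono2) auto
  also have "\<dots> \<le> (n - z) + (\<Sum>j\<in>?Z - {z}. n + 1 - j)"
    using assms(3) by (cases "z + 1 \<in> ?Z - {z}") (auto simp: insert_absorb)
  also have "\<dots> < (n + 1 - z) + (\<Sum>j\<in>?Z - {z}. n + 1 - j)"
    using assms by simp
  also have "\<dots> = zero_weight n c"
    unfolding zero_weight_def using assms by (simp add: sum.remove)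
  finally show ?thesis .
qed

lemma asm_steps_from_max_stable:
  assumes "2 \<le> n" "stable n c" "zeros_separated n c"
  shows "(asm_step n)\<^sup>*\<^sup>* (max_stable n) c"
  using assms(2,3)
proof (induction "zero_weight n c" arbitrary: c rule: less_induct)
  case less
  show ?case
  proof (cases "\<exists>j\<in>{1..n}. c j = 0")
    case False
    have "(asm_step n)\<^sup>*\<^sup>* (max_stable n) (fill_prefix n n c)"
      using fill_prefix_all[OF less.prems(1)] by simp
    then show ?thesis
      using False assms(1) by (intro asm_steps_from_fill_prefix[OF assms(1) less.prems(1)]) auto
  next
    case True
    define z where "z = (LEAST j. j \<in> {1..n} \<and> c j = 0)"
    have z: "z \<in> {1..n}" "c z = 0"
      using LeastI_ex[OF True[unfolded Bex_def]] by (simp_all add: z_def)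
    have before: "c j \<noteq> 0" if "1 \<le> j" "j < z" for j
      using not_less_Least[of j "\<lambda>j. j \<in> {1..n} \<and> c j = 0"] that z by (auto simp: z_def)
    have after: "c (z + 1) \<noteq> 0" if zn: "z < n"
    proof
      assume "c (z + 1) = 0"
      then obtain k where "z < k" "k < z + 1"
        using zeros_separatedD[OF less.prems(2), of z "z + 1"] z zn by auto
      then show False
        by simp
    qed
    have "zero_weight n (fill_prefix n z c) < zero_weight n c"
      using z by (intro zero_weight_fill_prefix_less[OF assms(1)]) simp_all
    moreover have "stable n (fill_prefix n z c)"
      using z by (intro stable_fill_prefix[OF less.prems(1)]) simp
    moreover have "zeros_separated n (fill_prefix n z c)"
      using z by (intro zeros_separated_fill_prefix[OF assms(1) less.prems(2)]) simp_all
    ultimately have "(asm_step n)\<^sup>*\<^sup>* (max_stable n) (fill_prefix n z c)"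
      by (rule less.hyps)
    then show ?thesis
      using z before after by (intro asm_steps_from_fill_prefix[OF assms(1) less.prems(1)]) simp_all
  qed
qed

theorem asm_recurrent_iff:
  assumes "2 \<le> n"
  shows "asm_recurrent n c \<longleftrightarrow> stable n c \<and> zeros_separated n c"
proof
  assume rec: "asm_recurrent n c"
  then have "stable n c"
    by (simp add: asm_recurrent_def)
  then have "(asm_step n)\<^sup>*\<^sup>* (max_stable n) c"
    using rec asm_steps_to_max_stable[OF assms] by (simp add: asm_recurrent_def)
  then show "stable n c \<and> zeros_separated n c"
    using \<open>stable n c\<close> zeros_separated_asm_steps zeros_separated_max_stable[OF assms] by blast
next
  assume "stable n c \<and> zeros_separated n c"
  then show "asm_recurrent n c"
    using asm_steps_from_max_stable[OF assms] asm_steps_to_max_stable[OF assms] stable_asm_steps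
    unfolding asm_recurrent_def by (meson rtranclp_trans)
qed

section \<open>Counting words\<close>

definition binom_sum :: "nat \<Rightarrow> nat \<Rightarrow> nat" where
  "binom_sum m k = (\<Sum>r\<le>m. (m choose r) * (r + k choose k))"

definition shifted_binom_sum :: "nat \<Rightarrow> nat \<Rightarrow> nat" where
  "shifted_binom_sum m k = (\<Sum>r\<le>m. (m choose r) * (r + 1 + k choose k))"

lemma binom_sum_0_left [simp]: "binom_sum 0 k = 1"
  by (simp add: binom_sum_def)

lemma shifted_binom_sum_0_right: "shifted_binom_sum m 0 = binom_sum m 0"
  by (simp add: binom_sum_def shifted_binom_sum_def)

lemma binom_sum_Suc: "binom_sum (Suc m) k = binom_sum m k + shifted_binom_sum m k"
proof -
  have "binom_sum m k = (\<Sum>r\<le>Suc m. (m choose r) * (r + k choose k))"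
    by (simp add: binom_sum_def)
  also have "\<dots> = 1 + (\<Sum>r\<le>m. (m choose Suc r) * (Suc r + k choose k))"
    by (subst sum.atMost_Suc_shift) simp
  finally have shift: "binom_sum m k = 1 + (\<Sum>r\<le>m. (m choose Suc r) * (Suc r + k choose k))" .
  have "binom_sum (Suc m) k = 1 + (\<Sum>r\<le>m. (Suc m choose Suc r) * (Suc r + k choose k))"
    unfolding binom_sum_def by (subst sum.atMost_Suc_shift) simp
  also have "\<dots> = 1 + (\<Sum>r\<le>m. (m choose Suc r) * (Suc r + k choose k)) + shifted_binom_sum m k"
    unfolding shifted_binom_sum_def by (simp add: sum.distrib algebra_simps)
  finally show ?thesis
    using shift by simp
qed

lemma shifted_binom_sum_Suc:
  "shifted_binom_sum m (Suc k) = binom_sum m (Suc k) + shifted_binom_sum m k"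
proof -
  have "shifted_binom_sum m (Suc k) =
      (\<Sum>r\<le>m. (m choose r) * (r + Suc k choose Suc k) + (m choose r) * (r + 1 + k choose k))"
    unfolding shifted_binom_sum_def by (intro sum.cong refl) (simp add: algebra_simps)
  then show ?thesis
    by (simp add: binom_sum_def shifted_binom_sum_def sum.distrib)
qed

definition zeros_separated_list :: "nat list \<Rightarrow> bool" where
  "zeros_separated_list w \<longleftrightarrow>
     (\<forall>j<length w. \<forall>i<j. w ! i = 0 \<longrightarrow> w ! j = 0 \<longrightarrow> (\<exists>k<j. i < k \<and> 2 \<le> w ! k))"

definition zeros_after_two :: "nat list \<Rightarrow> bool" where
  "zeros_after_two w \<longleftrightarrow> (\<forall>j<length w. w ! j = 0 \<longrightarrow> (\<exists>k<j. 2 \<le> w ! k))"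

lemma zeros_after_two_Nil [simp]: "zeros_after_two []"
  by (simp add: zeros_after_two_def)

lemma zeros_after_two_Cons [simp]:
  "zeros_after_two (x # w) \<longleftrightarrow> x \<noteq> 0 \<and> (2 \<le> x \<or> zeros_after_two w)"
  by (auto simp: zeros_after_two_def All_less_Suc2 Ex_less_Suc2)

lemma zeros_separated_list_Nil [simp]: "zeros_separated_list []"
  by (simp add: zeros_separated_list_def)

lemma zeros_separated_list_Cons [simp]:
  "zeros_separated_list (x # w) \<longleftrightarrow> zeros_separated_list w \<and> (x = 0 \<longrightarrow> zeros_after_two w)"
  by (auto simp: zeros_separated_list_def zeros_after_two_def All_less_Suc2 Ex_less_Suc2)

text \<open>A left-to-right scan; the flag records a zero that has not yet been followed by a 2.\<close>

fun scan_zeros :: "bool \<Rightarrow> nat list \<Rightarrow> bool" where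
  "scan_zeros pending [] = True"
| "scan_zeros pending (x # w) =
     (if x = 0 then \<not> pending \<and> scan_zeros True w
      else if 2 \<le> x then scan_zeros False w else scan_zeros pending w)"

lemma scan_zeros_iff:
  "scan_zeros pending w \<longleftrightarrow> zeros_separated_list w \<and> (pending \<longrightarrow> zeros_after_two w)"
  by (induction pending w rule: scan_zeros.induct) auto

lemma length_le_sum_list_if_scan_zeros:
  "scan_zeros pending w \<Longrightarrow> length w \<le> sum_list w + (if pending then 0 else 1)"
  by (induction pending w rule: scan_zeros.induct) (auto split: if_splits)

definition words :: "bool \<Rightarrow> nat \<Rightarrow> nat \<Rightarrow> nat list set" where
  "words pending n t = {w. length w = n \<and> set w \<subseteq> {0, 1, 2} \<and> scan_zeros pending w \<and>
     last w \<noteq> 2 \<and> sum_list w = t}"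

lemma finite_words: "finite (words pending n t)"
  by (rule finite_subset[OF _ finite_lists_length_eq[of "{0, 1, 2}" n]]) (auto simp: words_def)

lemma words_Suc:
  assumes "1 \<le> n"
  shows "words pending (Suc n) t =
     Cons 0 ` {w \<in> words True n t. \<not> pending} \<union>
     Cons 1 ` {w \<in> words pending n (t - 1). 1 \<le> t} \<union>
     Cons 2 ` {w \<in> words False n (t - 2). 2 \<le> t}"
proof (intro set_eqI iffI)
  fix w assume w: "w \<in> words pending (Suc n) t"
  then obtain x v where "w = x # v"
    by (cases w) (auto simp: words_def)
  moreover have "v \<noteq> []" "x \<in> {0, 1, 2}"
    using w assms \<open>w = x # v\<close> by (auto simp: words_def)
  ultimately show "w \<in> Cons 0 ` {w \<in> words True n t. \<not> pending} \<union>
     Cons 1 ` {w \<in> words pending n (t - 1). 1 \<le> t} \<union>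
     Cons 2 ` {w \<in> words False n (t - 2). 2 \<le> t}"
    using w by (auto simp: words_def)
next
  fix w assume "w \<in> Cons 0 ` {w \<in> words True n t. \<not> pending} \<union>
     Cons 1 ` {w \<in> words pending n (t - 1). 1 \<le> t} \<union>
     Cons 2 ` {w \<in> words False n (t - 2). 2 \<le> t}"
  then show "w \<in> words pending (Suc n) t"
    using assms by (auto simp: words_def split: if_splits)
qed

lemma card_Cons_image_Un:
  assumes "finite A" "finite B" "finite C" "a \<noteq> b" "a \<noteq> c" "b \<noteq> c"
  shows "card (Cons a ` A \<union> Cons b ` B \<union> Cons c ` C) = card A + card B + card C"
  using assms by (subst card_Un_disjoint card_Un_disjoint card_image; auto simp: inj_on_def)+

lemma card_words_Suc:
  assumes "1 \<le> n"
  shows "card (words pending (Suc n) t) =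
     (if pending then 0 else card (words True n t)) +
     (if 1 \<le> t then card (words pending n (t - 1)) else 0) +
     (if 2 \<le> t then card (words False n (t - 2)) else 0)"
  unfolding words_Suc[OF assms] by (subst card_Cons_image_Un) (simp_all add: finite_words)

definition count_pending :: "nat \<Rightarrow> nat \<Rightarrow> nat" where
  "count_pending n j = (if j < n then binom_sum (n - j - 1) j else 0)"

definition count_clear :: "nat \<Rightarrow> nat \<Rightarrow> nat" where
  "count_clear n j = (if j < n then shifted_binom_sum (n - j - 1) j else if j = n then 1 else 0)"

lemma count_pending_Suc: "count_pending (Suc n) j = count_pending n j + count_clear n j"
proof -
  consider "j < n" | "j = n" | "n < j"
    by linarith
  then show ?thesis
  proof cases
    case 1
    then have "Suc n - j - 1 = Suc (n - j - 1)"
      by simp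
    then show ?thesis
      using 1 by (simp add: count_pending_def count_clear_def binom_sum_Suc)
  qed (auto simp: count_pending_def count_clear_def)
qed

lemma count_clear_Suc_Suc:
  "count_clear (Suc n) (Suc j) = count_pending (Suc n) (Suc j) + count_clear n j"
  by (auto simp: count_pending_def count_clear_def shifted_binom_sum_Suc)

lemma count_clear_Suc_0: "count_clear (Suc n) 0 = count_pending (Suc n) 0"
  by (simp add: count_pending_def count_clear_def shifted_binom_sum_0_right)

lemma words_eq_empty_if_sum_small: "t + 1 < n \<Longrightarrow> words False n t = {}"
  using length_le_sum_list_if_scan_zeros[of False] by (fastforce simp: words_def)

lemma words_True_1: "words True (Suc 0) t = (if t = 1 then {[1]} else {})"
  by (auto simp: words_def length_Suc_conv)

lemma words_False_1: "words False (Suc 0) t = (if t \<le> 1 then {[t]} else {})"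
  by (auto simp: words_def length_Suc_conv)

lemma card_words_closed_form:
  assumes "1 \<le> n"
  shows "card (words True n (n + j)) = count_pending n j \<and>
    card (words False n (n - 1 + j)) = count_clear n j"
  using assms
proof (induction n arbitrary: j rule: nat_induct_at_least)
  case base
  show ?case
    by (simp add: words_True_1 words_False_1 count_pending_def count_clear_def
        shifted_binom_sum_0_right)
next
  case (Suc n)
  have "card (words True (Suc n) (Suc n + j)) = count_pending (Suc n) j"
    using card_words_Suc[OF Suc.hyps(1), of True] Suc.IH[of j] Suc.hyps(1)
    by (simp add: count_pending_Suc add.commute)
  moreover have "card (words False (Suc n) (Suc n - 1 + j)) = count_clear (Suc n) j"
  proof (cases j)
    case 0
    have "card (words False n (n - 2)) = 0" if "2 \<le> n"
      using words_eq_empty_if_sum_small[of "n - 2" n] that by simp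
    then show ?thesis
      using card_words_Suc[OF Suc.hyps(1), of False n] Suc.IH[of 0] Suc.hyps(1) 0
      by (simp add: count_pending_Suc count_clear_Suc_0)
  next
    case (Suc j')
    then show ?thesis
      using card_words_Suc[OF Suc.hyps(1), of False "n + j"] Suc.IH[of j] Suc.IH[of j'] Suc.hyps(1)
      by (simp add: count_pending_Suc count_clear_Suc_Suc)
  qed
  ultimately show ?case
    by blast
qed

definition recurrent_words :: "nat \<Rightarrow> nat \<Rightarrow> nat list set" where
  "recurrent_words n t = {w \<in> words False n t. hd w \<noteq> 2}"

text \<open>Raising the first letter by one is a bijection between the two sets.\<close>

lemma card_recurrent_words:
  assumes "1 \<le> n"
  shows "card (recurrent_words (Suc n) t) = card (words True (Suc n) (Suc t))"
proof -
  have "recurrent_words (Suc n) t =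
      Cons 0 ` words True n t \<union> Cons 1 ` {w \<in> words False n (t - 1). 1 \<le> t} \<union> Cons 2 ` {}"
    unfolding recurrent_words_def words_Suc[OF assms] by auto
  then have "card (recurrent_words (Suc n) t) =
      card (words True n t) + (if 1 \<le> t then card (words False n (t - 1)) else 0)"
    by (simp only:) (subst card_Cons_image_Un; simp add: finite_words)
  then show ?thesis
    using card_words_Suc[OF assms, of True "Suc t"] by (simp add: le_Suc_eq)
qed

section \<open>Configurations as words\<close>

definition config_word :: "nat \<Rightarrow> (nat \<Rightarrow> nat) \<Rightarrow> nat list" where
  "config_word n c = map c [1..<Suc n]"

lemma length_config_word [simp]: "length (config_word n c) = n"
  by (simp add: config_word_def)

lemma nth_config_word [simp]: "i < n \<Longrightarrow> config_word n c ! i = c (Suc i)"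
  by (simp add: config_word_def del: upt_Suc)

lemma config_word_eq_iff:
  assumes "is_config n c" "is_config n d"
  shows "config_word n c = config_word n d \<longleftrightarrow> c = d"
proof
  assume eq: "config_word n c = config_word n d"
  show "c = d"
  proof
    fix i
    show "c i = d i"
    proof (cases "i \<in> {1..n}")
      case True
      then have "i - 1 < n" "Suc (i - 1) = i"
        by auto
      then show ?thesis
        using arg_cong[OF eq, of "\<lambda>w. w ! (i - 1)"] by simp
    next
      case False
      then show ?thesis
        using assms by (simp add: is_config_def)
    qed
  qed
qed simp

lemma config_word_surj:
  assumes "length w = n"
  shows "\<exists>c. is_config n c \<and> config_word n c = w"
proof (intro exI conjI)
  let ?c = "\<lambda>i. if i \<in> {1..n} then w ! (i - 1) else 0"
  show "is_config n ?c"
    by (simp add: is_config_def)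
  show "config_word n ?c = w"
    using assms by (intro nth_equalityI) auto
qed

lemma card_config_word_preimage:
  assumes "\<And>w. w \<in> A \<Longrightarrow> length w = n"
  shows "card {c. is_config n c \<and> config_word n c \<in> A} = card A"
proof -
  have "inj_on (config_word n) {c. is_config n c \<and> config_word n c \<in> A}"
    by (intro inj_onI) (use config_word_eq_iff in blast)
  moreover have "config_word n ` {c. is_config n c \<and> config_word n c \<in> A} = A"
  proof (intro equalityI subsetI)
    fix w assume "w \<in> A"
    then obtain c where "is_config n c" "config_word n c = w"
      using config_word_surj assms by blast
    with \<open>w \<in> A\<close> show "w \<in> config_word n ` {c. is_config n c \<and> config_word n c \<in> A}"
      by blast
  qed auto
  ultimately show ?thesis
    using card_image by force
qed

lemma zeros_separated_iff_list: "zeros_separated n c \<longleftrightarrow> zeros_separated_list (config_word n c)"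
proof
  assume sep: "zeros_separated n c"
  show "zeros_separated_list (config_word n c)"
    unfolding zeros_separated_list_def
  proof (intro allI impI)
    fix j i assume "j < length (config_word n c)" "i < j"
      "config_word n c ! i = 0" "config_word n c ! j = 0"
    then obtain k where "Suc i < k" "k < Suc j" "2 \<le> c k"
      using zeros_separatedD[OF sep, of "Suc i" "Suc j"] by auto
    then show "\<exists>k<j. i < k \<and> 2 \<le> config_word n c ! k"
      using \<open>j < _\<close> by (intro exI[of _ "k - 1"]) auto
  qed
next
  assume sep: "zeros_separated_list (config_word n c)"
  show "zeros_separated n c"
    unfolding zeros_separated_def
  proof (intro allI impI)
    fix i j assume ij: "1 \<le> i" "i < j" "j \<le> n" "c i = 0" "c j = 0"
    then have "config_word n c ! (i - 1) = 0" "config_word n c ! (j - 1) = 0"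
      by simp_all
    moreover have "j - 1 < length (config_word n c)" "i - 1 < j - 1"
      using ij by auto
    ultimately obtain k where "k < j - 1" "i - 1 < k" "2 \<le> config_word n c ! k"
      using sep unfolding zeros_separated_list_def by blast
    then show "\<exists>k. i < k \<and> k < j \<and> 2 \<le> c k"
      using \<open>j \<le> n\<close> by (intro exI[of _ "Suc k"]) auto
  qed
qed

lemma stable_iff_config_word:
  assumes "2 \<le> n"
  shows "stable n c \<longleftrightarrow> is_config n c \<and> set (config_word n c) \<subseteq> {0, 1, 2} \<and>
    hd (config_word n c) \<noteq> 2 \<and> last (config_word n c) \<noteq> 2"
proof -
  have word: "set (config_word n c) = c ` {1..n}" "hd (config_word n c) = c 1"
    "last (config_word n c) = c n"
    using assms by (simp_all add: config_word_def hd_map last_map atLeastLessThanSuc_atLeastAtMost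
        del: upt_Suc)
  have "c i < fan_deg n i \<longleftrightarrow> c i \<in> {0, 1, 2} \<and> (i = 1 \<or> i = n \<longrightarrow> c i \<noteq> 2)"
    if "i \<in> {1..n}" for i
    using fan_deg_eq[OF assms that] by auto
  then have "(\<forall>i\<in>{1..n}. c i < fan_deg n i) \<longleftrightarrow>
      c ` {1..n} \<subseteq> {0, 1, 2} \<and> c 1 \<noteq> 2 \<and> c n \<noteq> 2"
    using assms by (auto simp: image_subset_iff)
  then show ?thesis
    by (simp add: stable_def word)
qed

lemma level_eq_iff_sum_config_word:
  assumes "1 \<le> n"
  shows "level n c = int k \<longleftrightarrow> sum_list (config_word n c) = n - 1 + k"
proof -
  have "sum_list (config_word n c) = (\<Sum>i\<in>{1..n}. c i)"
    by (simp add: config_word_def interv_sum_list_conv_sum_set_nat atLeastLessThanSuc_atLeastAtMost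
        del: upt_Suc)
  then have "level n c = int (sum_list (config_word n c)) - (int n - 1)"
    by (simp only: level_def)
  then show ?thesis
    using assms by linarith
qed

lemma recurrent_configs_of_level:
  assumes "2 \<le> n"
  shows "{c. asm_recurrent n c \<and> level n c = int k} =
    {c. is_config n c \<and> config_word n c \<in> recurrent_words n (n - 1 + k)}"
  using assms
  by (auto simp: asm_recurrent_iff stable_iff_config_word zeros_separated_iff_list
      level_eq_iff_sum_config_word recurrent_words_def words_def scan_zeros_iff)

theorem mainTheorem17:
  fixes n k :: nat
  assumes "n \<ge> 2" and "k < n"
  shows "card {c. asm_recurrent n c \<and> level n c = int k} =
         (\<Sum>r=0..n-k-1. ((n-k-1) choose r) * ((r+k) choose r))"
proof -
  have "card {c. asm_recurrent n c \<and> level n c = int k} = card (recurrent_words n (n - 1 + k))"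
    unfolding recurrent_configs_of_level[OF assms(1)]
    by (rule card_config_word_preimage) (simp add: recurrent_words_def words_def)
  also have "\<dots> = card (words True n (n + k))"
    using card_recurrent_words[of "n - 1" "n - 1 + k"] assms by simp
  also have "\<dots> = binom_sum (n - k - 1) k"
    using card_words_closed_form[of n k] assms by (simp add: count_pending_def)
  also have "\<dots> = (\<Sum>r=0..n-k-1. ((n-k-1) choose r) * ((r+k) choose r))"
    unfolding binom_sum_def atLeast0AtMost
    by (intro sum.cong refl) (metis add_diff_cancel_left' binomial_symmetric le_add1)
  finally show ?thesis .
qed

end
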